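(* Consider an instance with $n$ agents, $m$ indivisible items and binary additive valuations, and fix a stable allocation $\chi$ with profile $(h_1,\dots,h_n)$ (notation as in the context). Define $p_d,q_d,r_d,s_d$ as follows, for integers $d\ge0$: $p_d=\{i: h_i=d \text{ and } \chi \text{ admits a transfer } i\to j \text{ for some } j \text{ with } h_j=d-1\}$, $q_d=\{i: h_i=d \text{ and } \chi \text{ admits a transfer } k\to i \text{ for some } k \text{ with } h_k=d+1\}$, $r_d=\{i:h_i=d,\ i\notin p_d\cup q_d\}$, $s_d=p_d\cup q_{d-1}$ (with $q_{-1}=\emptyset$). Then $\mathsf{layer}_d=r_d$ and $\mathsf{layer}^-_d=s_d$ for every $d$.
   Context: Agents $[n]$, items $[m]$. Each agent $i$ has a set $L_i\subseteq[m]$ of liked items and valuation $v_i(S)=|S\cap L_i|$. An allocation $\chi=(\chi_1,\dots,\chi_n)$ is a tuple of pairwise disjoint subsets of $[m]$; it is clean if $\chi_i\subseteq L_i$ for all $i$, and max-USW if it maximizes $\sum_i v_i(\chi_i)$. Throughout, "allocation" means a clean max-USW allocation. Profile: $(h_1,\dots,h_n)$, $h_i=|\chi_i|$. Given $\chi$, form a directed graph on $[n]$ with an arc $(i,i')$, $i\ne i'$, whenever some $o\in\chi_i$ has $o\in L_{i'}$; $\chi$ admits a transfer $u\to v$ if there is a simple directed path from $u$ to $v$ with at least one arc. A transfer is narrowing if $h_u\ge h_v+2$; $\chi$ is stable if it admits no narrowing transfer. For an integer $d\ge0$, $\mathsf{layer}_d$ is the set of agents $i$ with $|\chi'_i|=d$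 for every stable allocation $\chi'$; for an integer $d\ge1$, $\mathsf{layer}^-_d$ is the set of agents $i$ such that $\{|\chi'_i|:\chi' \text{ stable}\}=\{d-1,d\}$. *)

theory Defs
  imports Main
begin

text \<open>Agents are 0..<n, items are 0..<m; L i is the set of items liked by agent i.\<close>

definition is_alloc :: "nat \<Rightarrow> nat \<Rightarrow> (nat \<Rightarrow> nat set) \<Rightarrow> bool" where
  "is_alloc n m \<chi> \<longleftrightarrow> (\<forall>i<n. \<chi> i \<subseteq> {0..<m}) \<and>
      (\<forall>i<n. \<forall>j<n. i \<noteq> j \<longrightarrow> \<chi> i \<inter> \<chi> j = {})"

definition clean :: "nat \<Rightarrow> (nat \<Rightarrow> nat set) \<Rightarrow> (nat \<Rightarrow> nat set) \<Rightarrow> bool" where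
  "clean n L \<chi> \<longleftrightarrow> (\<forall>i<n. \<chi> i \<subseteq> L i)"

definition usw :: "nat \<Rightarrow> (nat \<Rightarrow> nat set) \<Rightarrow> (nat \<Rightarrow> nat set) \<Rightarrow> nat" where
  "usw n L \<chi> = (\<Sum>i<n. card (\<chi> i \<inter> L i))"

definition max_usw :: "nat \<Rightarrow> nat \<Rightarrow> (nat \<Rightarrow> nat set) \<Rightarrow> (nat \<Rightarrow> nat set) \<Rightarrow> bool" where
  "max_usw n m L \<chi> \<longleftrightarrow> is_alloc n m \<chi> \<and>
      (\<forall>\<chi>'. is_alloc n m \<chi>' \<longrightarrow> usw n L \<chi>' \<le> usw n L \<chi>)"

text \<open>"allocation" in the paper's sense: clean and max-USW\<close>
definition good_alloc :: "nat \<Rightarrow> nat \<Rightarrow> (nat \<Rightarrow> nat set) \<Rightarrow> (nat \<Rightarrow> nat set) \<Rightarrow> bool" where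
  "good_alloc n m L \<chi> \<longleftrightarrow> is_alloc n m \<chi> \<and> clean n L \<chi> \<and> max_usw n m L \<chi>"

definition arc :: "nat \<Rightarrow> (nat \<Rightarrow> nat set) \<Rightarrow> (nat \<Rightarrow> nat set) \<Rightarrow> nat \<Rightarrow> nat \<Rightarrow> bool" where
  "arc n L \<chi> i i' \<longleftrightarrow> i < n \<and> i' < n \<and> i \<noteq> i' \<and> (\<exists>x\<in>\<chi> i. x \<in> L i')"

definition transfer :: "nat \<Rightarrow> (nat \<Rightarrow> nat set) \<Rightarrow> (nat \<Rightarrow> nat set) \<Rightarrow> nat \<Rightarrow> nat \<Rightarrow> bool" where
  "transfer n L \<chi> u v \<longleftrightarrow> (\<exists>ps. length ps \<ge> 2 \<and> distinct ps \<and> hd ps = u \<and> last ps = v \<and>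
      (\<forall>k. Suc k < length ps \<longrightarrow> arc n L \<chi> (ps ! k) (ps ! Suc k)))"

definition stable :: "nat \<Rightarrow> nat \<Rightarrow> (nat \<Rightarrow> nat set) \<Rightarrow> (nat \<Rightarrow> nat set) \<Rightarrow> bool" where
  "stable n m L \<chi> \<longleftrightarrow> good_alloc n m L \<chi> \<and>
      \<not> (\<exists>u<n. \<exists>v<n. transfer n L \<chi> u v \<and> card (\<chi> u) \<ge> card (\<chi> v) + 2)"

definition layer :: "nat \<Rightarrow> nat \<Rightarrow> (nat \<Rightarrow> nat set) \<Rightarrow> nat \<Rightarrow> nat set" where
  "layer n m L d = {i. i < n \<and> (\<forall>\<chi>'. stable n m L \<chi>' \<longrightarrow> card (\<chi>' i) = d)}"

definition layer_minus :: "nat \<Rightarrow> nat \<Rightarrow> (nat \<Rightarrow> nat set) \<Rightarrow> nat \<Rightarrow> nat set" where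
  "layer_minus n m L d = {i. i < n \<and> {card (\<chi>' i) | \<chi>'. stable n m L \<chi>'} = {d - 1, d}}"

definition pset :: "nat \<Rightarrow> (nat \<Rightarrow> nat set) \<Rightarrow> (nat \<Rightarrow> nat set) \<Rightarrow> nat \<Rightarrow> nat set" where
  "pset n L \<chi> d = {i. i < n \<and> card (\<chi> i) = d \<and>
      (\<exists>j<n. int (card (\<chi> j)) = int d - 1 \<and> transfer n L \<chi> i j)}"

definition qset :: "nat \<Rightarrow> (nat \<Rightarrow> nat set) \<Rightarrow> (nat \<Rightarrow> nat set) \<Rightarrow> nat \<Rightarrow> nat set" where
  "qset n L \<chi> d = {i. i < n \<and> card (\<chi> i) = d \<and>
      (\<exists>k<n. card (\<chi> k) = d + 1 \<and> transfer n L \<chi> k i)}"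

definition rset :: "nat \<Rightarrow> (nat \<Rightarrow> nat set) \<Rightarrow> (nat \<Rightarrow> nat set) \<Rightarrow> nat \<Rightarrow> nat set" where
  "rset n L \<chi> d = {i. i < n \<and> card (\<chi> i) = d \<and> i \<notin> pset n L \<chi> d \<union> qset n L \<chi> d}"

definition sset :: "nat \<Rightarrow> (nat \<Rightarrow> nat set) \<Rightarrow> (nat \<Rightarrow> nat set) \<Rightarrow> nat \<Rightarrow> nat set" where
  "sset n L \<chi> d = pset n L \<chi> d \<union> (if d = 0 then {} else qset n L \<chi> (d - 1))"

end

theory Submission
  imports Defs "HOL-Library.Transitive_Closure_Table"
begin

text \<open>
  Executing a transfer from u to v, i.e. passing one item along each arc of the path, keeps
  the allocation clean and max-USW and changes the profile only by -1 at u and +1 at v.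
  Conversely, if h'(a) < h(a) for two allocations \<chi> and \<chi>', there is some b with transfers
  from a to b for \<chi> and from b to a for \<chi>', and h(b) < h'(b): otherwise handing the
  \<chi>-bundles to all agents reachable from a via shared items, and the \<chi>'-bundles to everybody
  else, would beat \<chi>'. With this exchange argument, stable allocations are exactly the
  allocations minimising the sum of the squares h(i)^2. Comparing two stable allocations in the
  same way shows that a bundle size can only drop by one, for agents in p_d, or grow by one, for
  agents in q_d; both changes are realised by a single transfer between sizes d and d - 1
  (resp. d + 1 and d), which leaves the sum of squares unchanged.
\<close>

section \<open>Transfers as paths of the arc relation\<close>

lemma rtrancl_path_iff_successively:
  "rtrancl_path r x xs y \<longleftrightarrow> successively r (x # xs) \<and> last (x # xs) = y"
proof (induction xs arbitrary: x)
  case Nil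
  show ?case by (auto elim: rtrancl_path.cases intro: rtrancl_path.base)
next
  case (Cons z zs)
  have "rtrancl_path r x (z # zs) y \<longleftrightarrow> r x z \<and> rtrancl_path r z zs y"
    by (auto elim: rtrancl_path.cases intro: rtrancl_path.step)
  then show ?case using Cons.IH by simp
qed

lemma transfer_iff_rtrancl_path:
  "transfer n L \<chi> u v \<longleftrightarrow>
     (\<exists>xs. xs \<noteq> [] \<and> distinct (u # xs) \<and> rtrancl_path (arc n L \<chi>) u xs v)"
  unfolding transfer_def successively_conv_nth[symmetric] rtrancl_path_iff_successively
proof safe
  fix ps assume "2 \<le> length ps" "distinct ps" "successively (arc n L \<chi>) ps"
  then show "\<exists>xs. xs \<noteq> [] \<and> distinct (hd ps # xs) \<and>
      successively (arc n L \<chi>) (hd ps # xs) \<and> last (hd ps # xs) = last ps"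
    by (intro exI[of _ "tl ps"]) (cases ps; auto)
next
  fix xs assume "xs \<noteq> []" "distinct (u # xs)" "successively (arc n L \<chi>) (u # xs)"
  then show "\<exists>ps. 2 \<le> length ps \<and> distinct ps \<and> hd ps = u \<and> last ps = last (u # xs) \<and>
      successively (arc n L \<chi>) ps"
    by (intro exI[of _ "u # xs"]) (auto simp: Suc_le_eq)
qed

lemma transfer_iff_rtranclp:
  "transfer n L \<chi> u v \<longleftrightarrow> (arc n L \<chi>)\<^sup>*\<^sup>* u v \<and> u \<noteq> v"
proof
  assume "transfer n L \<chi> u v"
  then obtain xs where "xs \<noteq> []" "distinct (u # xs)" "rtrancl_path (arc n L \<chi>) u xs v"
    unfolding transfer_iff_rtrancl_path by blast
  then show "(arc n L \<chi>)\<^sup>*\<^sup>* u v \<and> u \<noteq> v"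
    using rtrancl_path_last rtranclp_eq_rtrancl_path by fastforce
next
  assume "(arc n L \<chi>)\<^sup>*\<^sup>* u v \<and> u \<noteq> v"
  then obtain xs where "rtrancl_path (arc n L \<chi>) u xs v" "u \<noteq> v"
    unfolding rtranclp_eq_rtrancl_path by blast
  then obtain xs' where "rtrancl_path (arc n L \<chi>) u xs' v" "distinct (u # xs')"
    by (blast elim: rtrancl_path_distinct)
  moreover have "xs' \<noteq> []"
    using calculation \<open>u \<noteq> v\<close> by (auto elim: rtrancl_path.cases)
  ultimately show "transfer n L \<chi> u v"
    unfolding transfer_iff_rtrancl_path by blast
qed

lemma transfer_neq: "transfer n L \<chi> u v \<Longrightarrow> u \<noteq> v"
  by (simp add: transfer_iff_rtranclp)

lemma transfer_less:
  assumes "transfer n L \<chi> u v"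
  shows "u < n" "v < n"
proof -
  obtain z zs where "rtrancl_path (arc n L \<chi>) u (z # zs) v"
    using assms unfolding transfer_iff_rtrancl_path by (metis neq_Nil_conv)
  then have "arc n L \<chi> u z" "Rangep (arc n L \<chi>) v"
    by (auto elim: rtrancl_path.cases dest: rtrancl_path_Range_end)
  then show "u < n" "v < n" unfolding arc_def by auto
qed

lemma transfer_trans:
  "transfer n L \<chi> u w \<Longrightarrow> transfer n L \<chi> w v \<Longrightarrow> u \<noteq> v \<Longrightarrow> transfer n L \<chi> u v"
  unfolding transfer_iff_rtranclp by (meson rtranclp_trans)

definition move_one :: "('a \<Rightarrow> int) \<Rightarrow> 'a \<Rightarrow> 'a \<Rightarrow> 'a \<Rightarrow> int" where
  "move_one f u v = f(u := f u - 1, v := f v + 1)"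

lemma sum_move_one_split:
  fixes g :: "'a \<Rightarrow> int \<Rightarrow> int"
  assumes "finite A" "u \<in> A" "v \<in> A" "u \<noteq> v"
  shows "(\<Sum>i\<in>A. g i (move_one f u v i)) =
    (\<Sum>i\<in>A. g i (f i)) - g u (f u) - g v (f v) + g u (f u - 1) + g v (f v + 1)"
proof -
  have split: "(\<Sum>i\<in>A. h i) = h u + h v + (\<Sum>i\<in>A - {u, v}. h i)" for h :: "'a \<Rightarrow> int"
  proof -
    have "(\<Sum>i\<in>A. h i) = h u + (\<Sum>i\<in>A - {u}. h i)"
      using assms by (intro sum.remove)
    also have "(\<Sum>i\<in>A - {u}. h i) = h v + (\<Sum>i\<in>A - {u} - {v}. h i)"
      using assms by (intro sum.remove) auto
    finally show ?thesis by (simp add: Diff_insert2 [symmetric] add.assoc)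
  qed
  have "(\<Sum>i\<in>A - {u, v}. g i (move_one f u v i)) = (\<Sum>i\<in>A - {u, v}. g i (f i))"
    by (rule sum.cong) (auto simp: move_one_def)
  then show ?thesis
    using split[of "\<lambda>i. g i (move_one f u v i)"] split[of "\<lambda>i. g i (f i)"] assms(4)
    by (simp add: move_one_def)
qed

lemma sum_power2_move_one:
  assumes "finite A" "u \<in> A" "v \<in> A" "u \<noteq> v"
  shows "(\<Sum>i\<in>A. move_one f u v i ^ 2) = (\<Sum>i\<in>A. f i ^ 2) + 2 * (f v - f u) + 2"
  using sum_move_one_split[OF assms, of "\<lambda>_ x. x ^ 2"] by (simp add: power2_eq_square algebra_simps)

lemma sum_abs_diff_move_one:
  assumes "finite A" "u \<in> A" "v \<in> A" "u \<noteq> v" "f u < g u" "g v < f v"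
  shows "(\<Sum>i\<in>A. \<bar>f i - move_one g u v i\<bar>) = (\<Sum>i\<in>A. \<bar>f i - g i\<bar>) - 2"
  using sum_move_one_split[OF assms(1-4), of "\<lambda>i x. \<bar>f i - x\<bar>" g] assms(5,6) by simp

section \<open>Clean max-USW allocations\<close>

definition profile :: "(nat \<Rightarrow> nat set) \<Rightarrow> nat \<Rightarrow> int" where
  "profile \<chi> i = int (card (\<chi> i))"

lemma is_alloc_finite: "is_alloc n m \<chi> \<Longrightarrow> i < n \<Longrightarrow> finite (\<chi> i)"
  unfolding is_alloc_def by (meson finite_atLeastLessThan finite_subset)

lemma usw_clean: "clean n L \<chi> \<Longrightarrow> usw n L \<chi> = (\<Sum>i<n. card (\<chi> i))"
  unfolding usw_def clean_def by (intro sum.cong) (auto simp: Int_absorb2)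

lemma is_alloc_sum_card: "is_alloc n m \<chi> \<Longrightarrow> (\<Sum>i<n. card (\<chi> i)) = card (\<Union>i<n. \<chi> i)"
  by (subst card_UN_disjoint) (auto simp: is_alloc_finite is_alloc_def)

lemma good_alloc_sum_card_eq:
  assumes "good_alloc n m L \<chi>" "good_alloc n m L \<chi>'"
  shows "(\<Sum>i<n. card (\<chi> i)) = (\<Sum>i<n. card (\<chi>' i))"
proof -
  have "usw n L \<chi> = usw n L \<chi>'"
    using assms unfolding good_alloc_def max_usw_def by (meson le_antisym)
  then show ?thesis
    using assms usw_clean unfolding good_alloc_def by metis
qed

lemma good_alloc_card_eq_if_le:
  assumes "good_alloc n m L \<chi>" "good_alloc n m L \<chi>'"
    and "\<forall>i<n. card (\<chi> i) \<le> card (\<chi>' i)" "i < n"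
  shows "card (\<chi> i) = card (\<chi>' i)"
  using sum_mono_inv[OF good_alloc_sum_card_eq[OF assms(1,2)]] assms(3,4) by simp

lemma is_alloc_patch:
  assumes "is_alloc n m \<chi>" "is_alloc n m \<chi>'"
    and "\<And>c d. c \<in> R \<Longrightarrow> d < n \<Longrightarrow> d \<notin> R \<Longrightarrow> \<chi> c \<inter> \<chi>' d = {}"
  shows "is_alloc n m (\<lambda>i. if i \<in> R then \<chi> i else \<chi>' i)"
  using assms unfolding is_alloc_def by (auto simp: disjoint_iff)

lemma good_alloc_move_item:
  assumes good: "good_alloc n m L \<chi>" and arc: "arc n L \<chi> u w"
  obtains \<chi>' where "good_alloc n m L \<chi>'" "\<And>i. i \<noteq> u \<Longrightarrow> \<chi> i \<subseteq> \<chi>' i"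
    "\<forall>i<n. profile \<chi>' i = move_one (profile \<chi>) u w i"
proof -
  obtain x where x: "x \<in> \<chi> u" "x \<in> L w" and uw: "u < n" "w < n" "u \<noteq> w"
    using arc unfolding arc_def by blast
  have alloc: "is_alloc n m \<chi>" and clean: "clean n L \<chi>" and max: "max_usw n m L \<chi>"
    using good unfolding good_alloc_def by auto
  have "x < m" using alloc x uw unfolding is_alloc_def by fastforce
  have x_only_u: "x \<notin> \<chi> j" if "j < n" "j \<noteq> u" for j
    using alloc x uw that unfolding is_alloc_def by blast
  define \<chi>' where "\<chi>' = \<chi>(u := \<chi> u - {x}, w := insert x (\<chi> w))"
  have alloc': "is_alloc n m \<chi>'"
    using alloc \<open>x < m\<close> x_only_u uw unfolding is_alloc_def \<chi>'_def by (auto; blast)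
  have clean': "clean n L \<chi>'" using clean x uw unfolding clean_def \<chi>'_def by auto
  have "(\<Union>i<n. \<chi>' i) = (\<Union>i<n. \<chi> i)"
    using uw x unfolding \<chi>'_def by (auto split: if_splits)
  then have "usw n L \<chi>' = usw n L \<chi>"
    using alloc alloc' clean clean' by (simp add: usw_clean is_alloc_sum_card)
  then have "good_alloc n m L \<chi>'"
    using max alloc' clean' unfolding good_alloc_def max_usw_def by simp
  moreover have "i \<noteq> u \<Longrightarrow> \<chi> i \<subseteq> \<chi>' i" for i unfolding \<chi>'_def by auto
  moreover have "\<forall>i<n. profile \<chi>' i = move_one (profile \<chi>) u w i"
  proof -
    have "finite (\<chi> u)" "finite (\<chi> w)" using is_alloc_finite[OF alloc] uw by auto
    moreover have "card (\<chi> u) \<ge> 1"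
      using x \<open>finite (\<chi> u)\<close> by (metis One_nat_def Suc_leI card_gt_0_iff empty_iff)
    ultimately show ?thesis
      using uw x x_only_u[OF uw(2)] unfolding profile_def move_one_def \<chi>'_def
      by (auto simp: card_Diff_singleton)
  qed
  ultimately show thesis using that by blast
qed

lemma good_alloc_move_along_path:
  "good_alloc n m L \<chi> \<Longrightarrow> rtrancl_path (arc n L \<chi>) u xs v \<Longrightarrow> distinct (u # xs) \<Longrightarrow> xs \<noteq> [] \<Longrightarrow>
   \<exists>\<chi>'. good_alloc n m L \<chi>' \<and> (\<forall>i<n. profile \<chi>' i = move_one (profile \<chi>) u v i)"
proof (induction xs arbitrary: u \<chi>)
  case Nil
  then show ?case by simp
next
  case (Cons w ws)
  have arc: "arc n L \<chi> u w" and path: "rtrancl_path (arc n L \<chi>) w ws v"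
    using Cons.prems(2) by (auto elim: rtrancl_path.cases)
  obtain \<chi>1 where \<chi>1: "good_alloc n m L \<chi>1" "\<And>i. i \<noteq> u \<Longrightarrow> \<chi> i \<subseteq> \<chi>1 i"
    "\<forall>i<n. profile \<chi>1 i = move_one (profile \<chi>) u w i"
    using good_alloc_move_item[OF Cons.prems(1) arc] by blast
  show ?case
  proof (cases "ws = []")
    case True
    then show ?thesis using path \<chi>1 by (auto elim: rtrancl_path.cases)
  next
    case False
    \<comment> \<open>only the bundle of u shrank, and u does not occur again on the path\<close>
    have "successively (arc n L \<chi>1) (w # ws)"
    proof (rule successively_mono)
      show "successively (arc n L \<chi>) (w # ws)"
        using path rtrancl_path_iff_successively by metis
      show "arc n L \<chi>1 x y" if "x \<in> set (w # ws)" "arc n L \<chi> x y" for x y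
        using that Cons.prems(3) \<chi>1(2)[of x] unfolding arc_def by auto
    qed
    then have "rtrancl_path (arc n L \<chi>1) w ws v"
      using path rtrancl_path_iff_successively by metis
    then obtain \<chi>2 where \<chi>2: "good_alloc n m L \<chi>2"
      "\<forall>i<n. profile \<chi>2 i = move_one (profile \<chi>1) w v i"
      using Cons.IH[OF \<chi>1(1) _ _ False] Cons.prems(3) by auto
    have "v \<in> set ws" using rtrancl_path_last[OF path False] False by auto
    then have "u \<noteq> w" "u \<noteq> v" "w \<noteq> v" using Cons.prems(3) by auto
    then show ?thesis
      using \<chi>1(3) \<chi>2 by (intro exI[of _ \<chi>2]) (auto simp: move_one_def)
  qed
qed

lemma good_alloc_transfer:
  assumes "good_alloc n m L \<chi>" "transfer n L \<chi> u v"
  obtains \<chi>' where "good_alloc n m L \<chi>'" "\<forall>i<n. profile \<chi>' i = move_one (profile \<chi>) u v i"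
  using assms good_alloc_move_along_path unfolding transfer_iff_rtrancl_path by metis

lemma good_alloc_exchange:
  assumes good: "good_alloc n m L \<chi>" and good': "good_alloc n m L \<chi>'"
    and a: "a < n" "card (\<chi>' a) < card (\<chi> a)"
  obtains b where "transfer n L \<chi> a b" "transfer n L \<chi>' b a" "card (\<chi> b) < card (\<chi>' b)"
proof -
  define E where "E c d \<longleftrightarrow> c < n \<and> d < n \<and> c \<noteq> d \<and> \<chi> c \<inter> \<chi>' d \<noteq> {}" for c d
  have E_arc: "E \<le> arc n L \<chi>" and E_arc': "E \<le> (arc n L \<chi>')\<inverse>\<inverse>"
    using good good' unfolding E_def arc_def good_alloc_def clean_def by blast+
  define R where "R = {c. c < n \<and> E\<^sup>*\<^sup>* a c}"
  have "\<exists>b. transfer n L \<chi> a b \<and> transfer n L \<chi>' b a \<and> card (\<chi> b) < card (\<chi>' b)"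
  proof (rule ccontr)
    assume no_b: "\<not> ?thesis"
    have le: "card (\<chi>' c) \<le> card (\<chi> c)" if "c \<in> R" for c
    proof (cases "c = a")
      case False
      have "E\<^sup>*\<^sup>* a c" "c < n" using that unfolding R_def by auto
      then have "transfer n L \<chi> a c" "transfer n L \<chi>' c a"
        using False rtranclp_mono[OF E_arc] rtranclp_mono[OF E_arc']
        by (auto simp: transfer_iff_rtranclp rtranclp_conversep)
      then show ?thesis using no_b by (meson not_le)
    qed (use a in simp)
    define \<chi>'' where "\<chi>'' i = (if i \<in> R then \<chi> i else \<chi>' i)" for i
    have "is_alloc n m \<chi>''"
      unfolding \<chi>''_def
    proof (rule is_alloc_patch)
      fix c d assume cd: "c \<in> R" "d < n" "d \<notin> R"
      show "\<chi> c \<inter> \<chi>' d = {}"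
      proof (rule ccontr)
        assume "\<chi> c \<inter> \<chi>' d \<noteq> {}"
        then have "E c d" using cd unfolding E_def R_def by auto
        then show False using cd unfolding R_def by (auto intro: rtranclp.rtrancl_into_rtrancl)
      qed
    qed (use good good' in \<open>auto simp: good_alloc_def\<close>)
    moreover have "clean n L \<chi>''"
      using good good' unfolding good_alloc_def clean_def \<chi>''_def by auto
    ultimately have "(\<Sum>i<n. card (\<chi>'' i)) \<le> (\<Sum>i<n. card (\<chi>' i))"
      using good' usw_clean unfolding good_alloc_def max_usw_def by metis
    moreover have "(\<Sum>i<n. card (\<chi>' i)) < (\<Sum>i<n. card (\<chi>'' i))"
      using le a by (intro sum_strict_mono_ex1) (auto simp: \<chi>''_def R_def)
    ultimately show False by simp
  qed
  then show thesis using that by blast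
qed

section \<open>Stable allocations minimise the sum of squared bundle sizes\<close>

lemma stable_good_alloc: "stable n m L \<chi> \<Longrightarrow> good_alloc n m L \<chi>"
  unfolding stable_def by simp

lemma stable_transfer_card_less:
  "stable n m L \<chi> \<Longrightarrow> transfer n L \<chi> u v \<Longrightarrow> card (\<chi> u) < card (\<chi> v) + 2"
  using transfer_less unfolding stable_def by force

definition sum_sq_profile :: "nat \<Rightarrow> (nat \<Rightarrow> nat set) \<Rightarrow> int" where
  "sum_sq_profile n \<chi> = (\<Sum>i<n. profile \<chi> i ^ 2)"

definition profile_dist :: "nat \<Rightarrow> (nat \<Rightarrow> nat set) \<Rightarrow> (nat \<Rightarrow> nat set) \<Rightarrow> int" where
  "profile_dist n \<chi> \<chi>' = (\<Sum>i<n. \<bar>profile \<chi> i - profile \<chi>' i\<bar>)"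

lemma sum_sq_profile_transfer:
  assumes "transfer n L \<chi> u v" "\<forall>i<n. profile \<chi>' i = move_one (profile \<chi>) u v i"
  shows "sum_sq_profile n \<chi>' = sum_sq_profile n \<chi> + 2 * (profile \<chi> v - profile \<chi> u) + 2"
  using sum_power2_move_one[of "{..<n}" u v "profile \<chi>"] transfer_less[OF assms(1)]
    transfer_neq[OF assms(1)] assms(2)
  unfolding sum_sq_profile_def by simp

lemma good_alloc_approach_stable:
  assumes stable: "stable n m L \<chi>" and good': "good_alloc n m L \<chi>'"
    and a: "a < n" "card (\<chi>' a) < card (\<chi> a)"
  obtains \<chi>'' where "good_alloc n m L \<chi>''" "sum_sq_profile n \<chi>'' \<le> sum_sq_profile n \<chi>'"
    "profile_dist n \<chi> \<chi>'' < profile_dist n \<chi> \<chi>'"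
proof -
  obtain b where ab: "transfer n L \<chi> a b" and ba: "transfer n L \<chi>' b a"
    and b: "card (\<chi> b) < card (\<chi>' b)"
    using good_alloc_exchange[OF stable_good_alloc[OF stable] good' a] .
  obtain \<chi>'' where good'': "good_alloc n m L \<chi>''"
    and \<chi>'': "\<forall>i<n. profile \<chi>'' i = move_one (profile \<chi>') b a i"
    using good_alloc_transfer[OF good' ba] .
  have "card (\<chi> a) < card (\<chi> b) + 2" using stable_transfer_card_less[OF stable ab] .
  then have "card (\<chi>' a) < card (\<chi>' b)" using a b by linarith
  then have sq: "sum_sq_profile n \<chi>'' \<le> sum_sq_profile n \<chi>'"
    using sum_sq_profile_transfer[OF ba \<chi>''] unfolding profile_def by simp
  have "profile_dist n \<chi> \<chi>'' = (\<Sum>i<n. \<bar>profile \<chi> i - move_one (profile \<chi>') b a i\<bar>)"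
    unfolding profile_dist_def using \<chi>'' by (intro sum.cong) auto
  also have "\<dots> = profile_dist n \<chi> \<chi>' - 2"
    unfolding profile_dist_def
  proof (rule sum_abs_diff_move_one)
    show "profile \<chi> b < profile \<chi>' b" "profile \<chi>' a < profile \<chi> a"
      using a b by (simp_all add: profile_def)
  qed (use a transfer_less[OF ba] transfer_neq[OF ba] in auto)
  finally show thesis using that good'' sq by simp
qed

lemma stable_sum_sq_profile_le:
  assumes stable: "stable n m L \<chi>"
  shows "good_alloc n m L \<chi>' \<Longrightarrow> sum_sq_profile n \<chi> \<le> sum_sq_profile n \<chi>'"
proof (induction "nat (profile_dist n \<chi> \<chi>')" arbitrary: \<chi>' rule: less_induct)
  case less
  show ?case
  proof (cases "\<exists>a<n. card (\<chi>' a) < card (\<chi> a)")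
    case True
    then obtain a where "a < n" "card (\<chi>' a) < card (\<chi> a)" by blast
    then obtain \<chi>'' where "good_alloc n m L \<chi>''" "sum_sq_profile n \<chi>'' \<le> sum_sq_profile n \<chi>'"
      "profile_dist n \<chi> \<chi>'' < profile_dist n \<chi> \<chi>'"
      using good_alloc_approach_stable[OF stable less.prems] by blast
    moreover have "profile_dist n \<chi> \<chi>'' \<ge> 0" unfolding profile_dist_def by (simp add: sum_nonneg)
    ultimately show ?thesis using less.hyps by force
  next
    case False
    then have "\<forall>i<n. card (\<chi> i) \<le> card (\<chi>' i)" using leI by blast
    then have "\<forall>i<n. card (\<chi> i) = card (\<chi>' i)"
      using good_alloc_card_eq_if_le[OF stable_good_alloc[OF stable] less.prems] by blast
    then show ?thesis unfolding sum_sq_profile_def profile_def by simp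
  qed
qed

lemma min_sum_sq_profile_imp_stable:
  assumes good: "good_alloc n m L \<chi>"
    and min: "\<And>\<chi>'. good_alloc n m L \<chi>' \<Longrightarrow> sum_sq_profile n \<chi> \<le> sum_sq_profile n \<chi>'"
  shows "stable n m L \<chi>"
  unfolding stable_def
proof (intro conjI good notI, elim exE conjE)
  fix u v assume uv: "transfer n L \<chi> u v" "card (\<chi> v) + 2 \<le> card (\<chi> u)"
  obtain \<chi>' where "good_alloc n m L \<chi>'" "\<forall>i<n. profile \<chi>' i = move_one (profile \<chi>) u v i"
    using good_alloc_transfer[OF good uv(1)] .
  moreover have "sum_sq_profile n \<chi>' < sum_sq_profile n \<chi>"
    using sum_sq_profile_transfer[OF uv(1) calculation(2)] uv(2) unfolding profile_def by simp
  ultimately show False using min by fastforce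
qed

lemma stable_iff_min_sum_sq_profile:
  assumes "stable n m L \<chi>"
  shows "stable n m L \<chi>' \<longleftrightarrow>
    good_alloc n m L \<chi>' \<and> sum_sq_profile n \<chi>' \<le> sum_sq_profile n \<chi>"
proof
  assume "stable n m L \<chi>'"
  then show "good_alloc n m L \<chi>' \<and> sum_sq_profile n \<chi>' \<le> sum_sq_profile n \<chi>"
    using assms stable_good_alloc stable_sum_sq_profile_le by blast
next
  assume "good_alloc n m L \<chi>' \<and> sum_sq_profile n \<chi>' \<le> sum_sq_profile n \<chi>"
  then show "stable n m L \<chi>'"
    using stable_sum_sq_profile_le[OF assms]
    by (intro min_sum_sq_profile_imp_stable) (auto intro: order_trans)
qed

section \<open>Layers\<close>

lemma stable_transfer_swap_cards:
  assumes stable: "stable n m L \<chi>" and uv: "transfer n L \<chi> u v" "card (\<chi> u) = card (\<chi> v) + 1"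
  obtains \<chi>' where "stable n m L \<chi>'" "card (\<chi>' u) = card (\<chi> v)" "card (\<chi>' v) = card (\<chi> u)"
proof -
  obtain \<chi>' where good': "good_alloc n m L \<chi>'"
    and \<chi>': "\<forall>i<n. profile \<chi>' i = move_one (profile \<chi>) u v i"
    using good_alloc_transfer[OF stable_good_alloc[OF stable] uv(1)] .
  have "sum_sq_profile n \<chi>' = sum_sq_profile n \<chi>"
    using sum_sq_profile_transfer[OF uv(1) \<chi>'] uv(2) unfolding profile_def by simp
  then have "stable n m L \<chi>'"
    using stable_iff_min_sum_sq_profile[OF stable] good' by simp
  moreover have "card (\<chi>' u) = card (\<chi> v)" "card (\<chi>' v) = card (\<chi> u)"
    using \<chi>' transfer_less[OF uv(1)] transfer_neq[OF uv(1)] uv(2)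
    unfolding profile_def move_one_def by auto
  ultimately show thesis using that by blast
qed

lemma pset_imp_stable_card_pred:
  assumes "stable n m L \<chi>" "i \<in> pset n L \<chi> d"
  obtains \<chi>' where "stable n m L \<chi>'" "card (\<chi>' i) + 1 = d"
proof -
  obtain j where "card (\<chi> i) = d" "int (card (\<chi> j)) = int d - 1" and ij: "transfer n L \<chi> i j"
    using assms(2) unfolding pset_def by blast
  then have "card (\<chi> i) = card (\<chi> j) + 1" by linarith
  then obtain \<chi>' where "stable n m L \<chi>'" "card (\<chi>' i) = card (\<chi> j)"
    using stable_transfer_swap_cards[OF assms(1) ij] by blast
  then show thesis using that \<open>card (\<chi> i) = card (\<chi> j) + 1\<close> \<open>card (\<chi> i) = d\<close> by simp
qed

lemma qset_imp_stable_card_succ: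
  assumes "stable n m L \<chi>" "i \<in> qset n L \<chi> d"
  obtains \<chi>' where "stable n m L \<chi>'" "card (\<chi>' i) = d + 1"
proof -
  obtain k where "card (\<chi> i) = d" "card (\<chi> k) = d + 1" and ki: "transfer n L \<chi> k i"
    using assms(2) unfolding qset_def by blast
  moreover obtain \<chi>' where "stable n m L \<chi>'" "card (\<chi>' i) = card (\<chi> k)"
    using stable_transfer_swap_cards[OF assms(1) ki] calculation by auto
  ultimately show thesis using that by simp
qed

lemma pset_pos: "i \<in> pset n L \<chi> d \<Longrightarrow> 0 < d"
  unfolding pset_def by auto

lemma pset_qset_disjoint:
  assumes "stable n m L \<chi>"
  shows "pset n L \<chi> d \<inter> qset n L \<chi> d = {}"
proof (intro equalityI subsetI)
  fix i assume "i \<in> pset n L \<chi> d \<inter> qset n L \<chi> d"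
  then obtain j k where "int (card (\<chi> j)) = int d - 1" "transfer n L \<chi> i j"
    and "card (\<chi> k) = d + 1" "transfer n L \<chi> k i"
    unfolding pset_def qset_def by blast
  moreover have "k \<noteq> j" using calculation by auto
  ultimately have "transfer n L \<chi> k j" using transfer_trans by blast
  then show "i \<in> {}"
    using stable_transfer_card_less[OF assms] \<open>card (\<chi> k) = d + 1\<close> \<open>int (card (\<chi> j)) = int d - 1\<close>
    by fastforce
qed simp

lemma stable_card_cases:
  assumes stable: "stable n m L \<chi>" and stable': "stable n m L \<chi>'" and i: "i < n"
  obtains "card (\<chi>' i) = card (\<chi> i)"
    | "card (\<chi>' i) + 1 = card (\<chi> i)" "i \<in> pset n L \<chi> (card (\<chi> i))"
    | "card (\<chi>' i) = card (\<chi> i) + 1" "i \<in> qset n L \<chi> (card (\<chi> i))"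
proof -
  have good: "good_alloc n m L \<chi>" and good': "good_alloc n m L \<chi>'"
    using stable stable' by (simp_all add: stable_good_alloc)
  consider "card (\<chi>' i) < card (\<chi> i)" | "card (\<chi>' i) = card (\<chi> i)" | "card (\<chi> i) < card (\<chi>' i)"
    by linarith
  then show thesis
  proof cases
    case 1
    then obtain b where b: "transfer n L \<chi> i b" "transfer n L \<chi>' b i" "card (\<chi> b) < card (\<chi>' b)"
      using good_alloc_exchange[OF good good' i] by blast
    have "card (\<chi> i) < card (\<chi> b) + 2" "card (\<chi>' b) < card (\<chi>' i) + 2"
      using stable_transfer_card_less[OF stable] stable_transfer_card_less[OF stable'] b by blast+
    then have "card (\<chi>' i) + 1 = card (\<chi> i)" "int (card (\<chi> b)) = int (card (\<chi> i)) - 1"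
      using 1 b(3) by linarith+
    then show thesis using that(2) b(1) transfer_less[OF b(1)] unfolding pset_def by blast
  next
    case 2
    then show thesis using that(1) by blast
  next
    case 3
    then obtain b where b: "transfer n L \<chi>' i b" "transfer n L \<chi> b i" "card (\<chi>' b) < card (\<chi> b)"
      using good_alloc_exchange[OF good' good i] by blast
    have "card (\<chi> b) < card (\<chi> i) + 2" "card (\<chi>' i) < card (\<chi>' b) + 2"
      using stable_transfer_card_less[OF stable] stable_transfer_card_less[OF stable'] b by blast+
    then have "card (\<chi>' i) = card (\<chi> i) + 1" "card (\<chi> b) = card (\<chi> i) + 1"
      using 3 b(3) by linarith+
    then show thesis using that(3) b(2) transfer_less[OF b(2)] unfolding qset_def by blast
  qed
qed

definition stable_sizes :: "nat \<Rightarrow> nat \<Rightarrow> (nat \<Rightarrow> nat set) \<Rightarrow> nat \<Rightarrow> nat set" where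
  "stable_sizes n m L i = {card (\<chi>' i) | \<chi>'. stable n m L \<chi>'}"

lemma stable_sizes_eq:
  assumes stable: "stable n m L \<chi>" and i: "i < n"
  shows "stable_sizes n m L i =
    (if i \<in> pset n L \<chi> (card (\<chi> i)) then {card (\<chi> i) - 1, card (\<chi> i)}
     else if i \<in> qset n L \<chi> (card (\<chi> i)) then {card (\<chi> i), card (\<chi> i) + 1}
     else {card (\<chi> i)})" (is "_ = ?S")
proof (intro equalityI subsetI)
  fix x assume "x \<in> stable_sizes n m L i"
  then obtain \<chi>' where stable': "stable n m L \<chi>'" and x: "x = card (\<chi>' i)"
    unfolding stable_sizes_def by blast
  from stable_card_cases[OF stable stable' i] show "x \<in> ?S"
  proof cases
    case 3
    then have "i \<notin> pset n L \<chi> (card (\<chi> i))" using pset_qset_disjoint[OF stable] by blast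
    then show ?thesis using 3 x by simp
  qed (use x in auto)
next
  fix x assume x: "x \<in> ?S"
  have "card (\<chi> i) \<in> stable_sizes n m L i"
    using stable unfolding stable_sizes_def by blast
  moreover have "card (\<chi> i) - 1 \<in> stable_sizes n m L i" if p: "i \<in> pset n L \<chi> (card (\<chi> i))"
  proof -
    obtain \<chi>' where "stable n m L \<chi>'" "card (\<chi>' i) + 1 = card (\<chi> i)"
      using pset_imp_stable_card_pred[OF stable p] .
    then show ?thesis unfolding stable_sizes_def by force
  qed
  moreover have "card (\<chi> i) + 1 \<in> stable_sizes n m L i" if q: "i \<in> qset n L \<chi> (card (\<chi> i))"
  proof -
    obtain \<chi>' where "stable n m L \<chi>'" "card (\<chi>' i) = card (\<chi> i) + 1"
      using qset_imp_stable_card_succ[OF stable q] .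
    then show ?thesis unfolding stable_sizes_def by force
  qed
  ultimately show "x \<in> stable_sizes n m L i"
    using x by (cases "i \<in> pset n L \<chi> (card (\<chi> i))"; cases "i \<in> qset n L \<chi> (card (\<chi> i))") auto
qed

lemma pset_card: "i \<in> pset n L \<chi> d \<Longrightarrow> card (\<chi> i) = d"
  by (simp add: pset_def)

lemma qset_card: "i \<in> qset n L \<chi> d \<Longrightarrow> card (\<chi> i) = d"
  by (simp add: qset_def)

lemma stable_sizes_subset_singleton_iff:
  assumes stable: "stable n m L \<chi>" and i: "i < n"
  shows "stable_sizes n m L i \<subseteq> {d} \<longleftrightarrow> i \<in> rset n L \<chi> d"
proof -
  consider (p) "i \<in> pset n L \<chi> (card (\<chi> i))"
    | (q) "i \<notin> pset n L \<chi> (card (\<chi> i))" "i \<in> qset n L \<chi> (card (\<chi> i))"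
    | (r) "i \<notin> pset n L \<chi> (card (\<chi> i))" "i \<notin> qset n L \<chi> (card (\<chi> i))"
    by blast
  then show ?thesis
  proof cases
    case p
    then show ?thesis using stable_sizes_eq[OF stable i] pset_pos[OF p] by (auto simp: rset_def)
  qed (use i stable_sizes_eq[OF stable i] in \<open>auto simp: rset_def\<close>)
qed

lemma stable_sizes_eq_pair_iff:
  assumes stable: "stable n m L \<chi>" and i: "i < n" and d: "1 \<le> d"
  shows "stable_sizes n m L i = {d - 1, d} \<longleftrightarrow> i \<in> sset n L \<chi> d"
proof -
  have sset: "i \<in> sset n L \<chi> d \<longleftrightarrow> i \<in> pset n L \<chi> d \<or> i \<in> qset n L \<chi> (d - 1)"
    using d by (simp add: sset_def)
  consider (p) "i \<in> pset n L \<chi> (card (\<chi> i))"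
    | (q) "i \<notin> pset n L \<chi> (card (\<chi> i))" "i \<in> qset n L \<chi> (card (\<chi> i))"
    | (r) "i \<notin> pset n L \<chi> (card (\<chi> i))" "i \<notin> qset n L \<chi> (card (\<chi> i))"
    by blast
  then show ?thesis
  proof cases
    case p
    then have "i \<notin> qset n L \<chi> (card (\<chi> i))" using pset_qset_disjoint[OF stable] by blast
    then have "i \<in> sset n L \<chi> d \<longleftrightarrow> card (\<chi> i) = d"
      using p pset_card qset_card unfolding sset by metis
    moreover have "stable_sizes n m L i = {d - 1, d} \<longleftrightarrow> card (\<chi> i) = d"
      using p pset_pos[OF p] d stable_sizes_eq[OF stable i] by (auto simp: doubleton_eq_iff)
    ultimately show ?thesis by simp
  next
    case q
    then have "i \<in> sset n L \<chi> d \<longleftrightarrow> card (\<chi> i) + 1 = d"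
      using d pset_card qset_card unfolding sset by (metis add_diff_cancel_right' le_add_diff_inverse2)
    moreover have "stable_sizes n m L i = {d - 1, d} \<longleftrightarrow> card (\<chi> i) + 1 = d"
      using q d stable_sizes_eq[OF stable i] by (auto simp: doubleton_eq_iff)
    ultimately show ?thesis by simp
  next
    case r
    then have "i \<notin> sset n L \<chi> d"
      using pset_card qset_card unfolding sset by metis
    moreover have "stable_sizes n m L i \<noteq> {d - 1, d}"
      using r d stable_sizes_eq[OF stable i] by (auto simp: doubleton_eq_iff)
    ultimately show ?thesis by simp
  qed
qed

lemma layer_eq_rset:
  assumes "stable n m L \<chi>"
  shows "layer n m L d = rset n L \<chi> d"
proof -
  have "layer n m L d = {i. i < n \<and> stable_sizes n m L i \<subseteq> {d}}"
    unfolding layer_def stable_sizes_def by blast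
  then show ?thesis
    using stable_sizes_subset_singleton_iff[OF assms] unfolding rset_def by auto
qed

lemma layer_minus_eq_sset:
  assumes "stable n m L \<chi>" and d: "1 \<le> d"
  shows "layer_minus n m L d = sset n L \<chi> d"
proof -
  have "layer_minus n m L d = {i. i < n \<and> stable_sizes n m L i = {d - 1, d}}"
    unfolding layer_minus_def stable_sizes_def ..
  moreover have "i < n" if "i \<in> sset n L \<chi> d" for i
    using that d unfolding sset_def pset_def qset_def by auto
  ultimately show ?thesis
    using stable_sizes_eq_pair_iff[OF assms(1) _ d] by blast
qed

theorem lemma3:
  fixes n m :: nat and L \<chi> :: "nat \<Rightarrow> nat set"
  assumes "\<forall>i<n. L i \<subseteq> {0..<m}"
    and "stable n m L \<chi>"
  shows "(\<forall>d. layer n m L d = rset n L \<chi> d) \<and>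
         (\<forall>d\<ge>1. layer_minus n m L d = sset n L \<chi> d)"
  using layer_eq_rset[OF assms(2)] layer_minus_eq_sset[OF assms(2)] by blast

end
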